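(* Let $R$ be a commutative ring, $I=(f_1,\dots,f_r)$, $\mathfrak a=(a_1,\dots,a_s)\subseteq I$, $g=\operatorname{grade}(I)$, and $\Phi=(c_{ij})$ an $r\times s$ matrix with $a_j=\sum_i c_{ij}f_i$. With $\Gamma_\bullet$ and $\tilde H_\bullet$ as in the context, $$\operatorname{Kitt}(\mathfrak a,I)=\mathfrak a+\langle\Gamma_\bullet\cdot\tilde H_\bullet\rangle_r=\mathfrak a+\sum_{i=\max\{0,r-s\}}^{r-g}\Gamma_{r-i}\cdot\tilde H_i .$$
   Context: $K_\bullet=K_\bullet(\mathbf f;R)$ is the Koszul DG algebra: exterior algebra over $R$ on $e_1,\dots,e_r$ with $\partial(e_i)=f_i$. Set $\zeta_j=\sum_i c_{ij}e_i$, let $\Gamma_\bullet$ be the $R$-subalgebra generated by $\zeta_1,\dots,\zeta_s$ and $Z_\bullet$ the subalgebra of Koszul cycles. $\tilde H_\bullet$ is the $R$-subalgebra of $K_\bullet$ generated by (cycle) representatives of the Koszul homology classes of $H_\bullet(\mathbf f;R)$, $\tilde H_i$ its degree-$i$ part. For graded subsets $A_\bullet,B_\bullet$ of $K_\bullet$, $\langle A_\bullet\cdot B_\bullet\rangle_r$ (resp. $A_j\cdot B_{r-j}$) is the $R$-span in $K_r$ of products $x\wedge y$ with $x\in A_j, y\in B_{r-j}$ (all $j$, resp. fixed $j$), identified with an ideal of $R$ via $K_r=Re_1\wedge\cdots\wedge e_r\cong R$. $\operatorname{Kitt}(\mathfrak a,I):=\langle\Gamma_\bullet\cdot Z_\bullet\rangle_r$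 (this ideal does not depend on the choice of generators or of $\Phi$). *)

theory Defs
  imports Main "HOL-Library.Extended_Nat"
begin

text \<open>An element of the exterior algebra on e_0,...,e_{r-1} is represented by its coefficient
  function on index sets S (standing for e_S = wedge of e_i, i in S, in increasing order).\<close>

type_synonym 'a kelt = "nat set \<Rightarrow> 'a"

definition kelem :: "nat \<Rightarrow> ('a::comm_ring_1) kelt set" where
  "kelem r = {x. \<forall>S. x S \<noteq> 0 \<longrightarrow> S \<subseteq> {0..<r}}"

definition kdeg :: "nat \<Rightarrow> nat \<Rightarrow> ('a::comm_ring_1) kelt set" where
  "kdeg r i = {x \<in> kelem r. \<forall>S. x S \<noteq> 0 \<longrightarrow> card S = i}"

text \<open>Sign of e_S wedge e_T for disjoint S, T.\<close>
definition ksign :: "nat set \<Rightarrow> nat set \<Rightarrow> 'a::comm_ring_1" where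
  "ksign S T = (-1) ^ card {(i, j). i \<in> S \<and> j \<in> T \<and> j < i}"

definition wedge :: "('a::comm_ring_1) kelt \<Rightarrow> 'a kelt \<Rightarrow> 'a kelt" where
  "wedge x y = (\<lambda>U. \<Sum>S\<in>Pow U. ksign S (U - S) * x S * y (U - S))"

text \<open>Koszul differential: d(e_i) = f_i.\<close>
definition kd :: "nat \<Rightarrow> (nat \<Rightarrow> 'a::comm_ring_1) \<Rightarrow> 'a kelt \<Rightarrow> 'a kelt" where
  "kd r f x = (\<lambda>T. \<Sum>i\<in>{0..<r} - T. (-1) ^ card {j\<in>T. j < i} * f i * x (insert i T))"

definition kcycles :: "nat \<Rightarrow> (nat \<Rightarrow> 'a::comm_ring_1) \<Rightarrow> 'a kelt set" where
  "kcycles r f = {x \<in> kelem r. kd r f x = (\<lambda>_. 0)}"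

definition kbound :: "nat \<Rightarrow> (nat \<Rightarrow> 'a::comm_ring_1) \<Rightarrow> nat \<Rightarrow> 'a kelt set" where
  "kbound r f i = {kd r f w | w. w \<in> kdeg r (Suc i)}"

inductive_set subalg :: "('a::comm_ring_1) kelt set \<Rightarrow> 'a kelt set" for G where
  gen: "g \<in> G \<Longrightarrow> g \<in> subalg G"
| scalar: "(\<lambda>U. if U = {} then c else 0) \<in> subalg G"
| add: "x \<in> subalg G \<Longrightarrow> y \<in> subalg G \<Longrightarrow> (\<lambda>U. x U + y U) \<in> subalg G"
| smult: "x \<in> subalg G \<Longrightarrow> (\<lambda>U. c * x U) \<in> subalg G"
| mult: "x \<in> subalg G \<Longrightarrow> y \<in> subalg G \<Longrightarrow> wedge x y \<in> subalg G"

definition zeta :: "nat \<Rightarrow> (nat \<Rightarrow> nat \<Rightarrow> 'a::comm_ring_1) \<Rightarrow> nat \<Rightarrow> 'a kelt" where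
  "zeta r c j = (\<lambda>U. \<Sum>i<r. if U = {i} then c i j else 0)"

definition Gamma :: "nat \<Rightarrow> nat \<Rightarrow> (nat \<Rightarrow> nat \<Rightarrow> 'a::comm_ring_1) \<Rightarrow> 'a kelt set" where
  "Gamma r s c = subalg (zeta r c ` {..<s})"

definition koszul_reps ::
  "nat \<Rightarrow> (nat \<Rightarrow> 'a::comm_ring_1) \<Rightarrow> (nat \<Rightarrow> 'a kelt \<Rightarrow> 'a kelt) \<Rightarrow> bool" where
  "koszul_reps r f rep \<longleftrightarrow>
     (\<forall>i z. z \<in> kdeg r i \<inter> kcycles r f \<longrightarrow>
        rep i z \<in> kdeg r i \<inter> kcycles r f \<and>
        (\<lambda>U. z U - rep i z U) \<in> kbound r f i \<and>
        (\<forall>z'. z' \<in> kdeg r i \<inter> kcycles r f \<and> (\<lambda>U. z U - z' U) \<in> kbound r f i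
              \<longrightarrow> rep i z' = rep i z))"

definition Htilde :: "nat \<Rightarrow> (nat \<Rightarrow> 'a::comm_ring_1) \<Rightarrow> (nat \<Rightarrow> 'a kelt \<Rightarrow> 'a kelt) \<Rightarrow> 'a kelt set" where
  "Htilde r f rep = subalg {rep i z | i z. z \<in> kdeg r i \<inter> kcycles r f}"

definition kspan :: "('a::comm_ring_1) kelt set \<Rightarrow> 'a kelt set" where
  "kspan X = {(\<lambda>U. \<Sum>x\<in>F. k x * x U) | F k. finite F \<and> F \<subseteq> X}"

definition rspan :: "('a::comm_ring_1) set \<Rightarrow> 'a set" where
  "rspan X = {(\<Sum>x\<in>F. k x * x) | F k. finite F \<and> F \<subseteq> X}"

definition ideal_sum :: "('a::comm_ring_1) set set \<Rightarrow> 'a set" where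
  "ideal_sum \<I> = rspan (\<Union>\<I>)"

text \<open>\<langle>A\<cdot>B\<rangle>_r: span in K_r of all x \<and> y, x \<in> A_j, y \<in> B_{r-j}, identified with an
  ideal of R via K_r = R e_0\<and>...\<and>e_{r-1} (i.e. taking the coefficient at {0..<r}).\<close>
definition top_ideal :: "nat \<Rightarrow> ('a::comm_ring_1) kelt set \<Rightarrow> 'a kelt set \<Rightarrow> 'a set" where
  "top_ideal r A B = (\<lambda>z. z {0..<r}) `
     kspan {wedge x y | x y j. j \<le> r \<and> x \<in> A \<inter> kdeg r j \<and> y \<in> B \<inter> kdeg r (r - j)}"

definition top_ideal_deg :: "nat \<Rightarrow> ('a::comm_ring_1) kelt set \<Rightarrow> 'a kelt set \<Rightarrow> nat \<Rightarrow> 'a set" where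
  "top_ideal_deg r A B j = (\<lambda>z. z {0..<r}) `
     kspan {wedge x y | x y. x \<in> A \<inter> kdeg r j \<and> y \<in> B \<inter> kdeg r (r - j)}"

definition kitt :: "nat \<Rightarrow> nat \<Rightarrow> (nat \<Rightarrow> nat \<Rightarrow> 'a::comm_ring_1) \<Rightarrow> (nat \<Rightarrow> 'a) \<Rightarrow> 'a set" where
  "kitt r s c f = top_ideal r (Gamma r s c) (kcycles r f)"

definition koszul_H_nonzero :: "nat \<Rightarrow> (nat \<Rightarrow> 'a::comm_ring_1) \<Rightarrow> nat \<Rightarrow> bool" where
  "koszul_H_nonzero r f i \<longleftrightarrow> (\<exists>z \<in> kdeg r i \<inter> kcycles r f. z \<notin> kbound r f i)"

definition kgrade :: "nat \<Rightarrow> (nat \<Rightarrow> 'a::comm_ring_1) \<Rightarrow> enat" where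
  "kgrade r f = (if \<exists>i\<le>r. koszul_H_nonzero r f i
                 then enat (r - Max {i. i \<le> r \<and> koszul_H_nonzero r f i}) else \<infinity>)"

end

theory Submission
  imports Defs "HOL-Library.Function_Algebras" "HOL-Library.Disjoint_Sets"
begin

text \<open>
  Every Koszul cycle z of degree r - j is its chosen representative plus a boundary d w.  For x in
  Gamma of degree j, the Leibniz rule and the vanishing of d in top degree turn the top coefficient
  of x wedge d w into that of +-(d x wedge w), and d maps Gamma into a K because d zeta_j = a_j.
  Hence Kitt is contained in a + <Gamma . H>_r; conversely a_j is the top coefficient of
  zeta_j wedge d(e_1 ... e_r), a product of an element of Gamma with a cycle.  For the graded
  form, Gamma vanishes above degree s because it is spanned by products of distinct zeta_j, and
  H_i(f) = 0 for i > r - grade I, so representatives of such degrees are boundaries and contribute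
  only to a.
\<close>

section \<open>Ideals and spans\<close>

(* ring_mod.span X is the ideal of R generated by X; kelt_mod.span is the R-span inside K. *)
interpretation ring_mod: module "(*) :: 'a::comm_ring_1 \<Rightarrow> 'a \<Rightarrow> 'a"
  by unfold_locales (simp_all add: algebra_simps)

interpretation kelt_mod: module "\<lambda>(c::'a::comm_ring_1) (x::'a kelt) U. c * x U"
  by unfold_locales (simp_all add: fun_eq_iff distrib_left distrib_right)

(* As simp rules these reassociate products and loop against mult_ac. *)
declare ring_mod.scale_scale [simp del] kelt_mod.scale_scale [simp del]

lemma rspan_eq_span: "rspan X = ring_mod.span X"
  by (simp add: rspan_def ring_mod.span_explicit)

lemma sum_fun_eq: "(\<Sum>a\<in>A. g a) = (\<lambda>U. \<Sum>a\<in>A. g a U)"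
  by (induction A rule: infinite_finite_induct) (simp_all add: fun_eq_iff)

lemma kspan_eq_span: "kspan X = kelt_mod.span X"
  unfolding kspan_def kelt_mod.span_explicit sum_fun_eq ..

lemma coeff_span: "(\<lambda>z. z P) ` kelt_mod.span G = ring_mod.span ((\<lambda>z. z P) ` G)"
proof -
  have "module_hom (\<lambda>c (x::'a::comm_ring_1 kelt) U. c * x U) (*) (\<lambda>z. z P)"
    by unfold_locales simp_all
  then show ?thesis by (rule module_hom.span_image[symmetric])
qed

lemma ideal_sum_span_image: "ideal_sum (ring_mod.span ` \<X>) = ring_mod.span (\<Union>\<X>)"
  unfolding ideal_sum_def rspan_eq_span ring_mod.span_eq
  by (auto intro: ring_mod.span_superset[THEN subsetD] elim: ring_mod.span_mono[THEN subsetD, rotated])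

section \<open>Signs of permutations\<close>

definition inv_count :: "nat set \<Rightarrow> nat set \<Rightarrow> nat" where
  "inv_count S T = card {(i, j). i \<in> S \<and> j \<in> T \<and> j < i}"

definition card_below :: "nat set \<Rightarrow> nat \<Rightarrow> nat" where
  "card_below T i = card {j\<in>T. j < i}"

definition card_above :: "nat set \<Rightarrow> nat \<Rightarrow> nat" where
  "card_above T i = card {j\<in>T. i < j}"

lemma ksign_inv_count: "ksign S T = (-1) ^ inv_count S T"
  by (simp add: ksign_def inv_count_def)

lemma minus_one_power_parity_eq: "even m = even n \<Longrightarrow> (-1::'a::comm_ring_1) ^ m = (-1) ^ n"
  by (metis minus_one_power_iff)

lemma finite_inversions: "finite S \<Longrightarrow> finite {(i, j). i \<in> S \<and> j \<in> T \<and> j < (i::nat)}"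
  by (rule finite_subset[of _ "S \<times> {..<Max (insert 0 S)}"])
    (auto intro: order.strict_trans2[OF _ Max_ge])

lemma inv_count_Un_left:
  assumes "finite A" "finite B" "A \<inter> B = {}"
  shows "inv_count (A \<union> B) C = inv_count A C + inv_count B C"
proof -
  have "{(i, j). i \<in> A \<union> B \<and> j \<in> C \<and> j < i} =
        {(i, j). i \<in> A \<and> j \<in> C \<and> j < i} \<union> {(i, j). i \<in> B \<and> j \<in> C \<and> j < i}" by auto
  then show ?thesis
    unfolding inv_count_def using assms by (subst card_Un_disjoint[symmetric]) (auto simp: finite_inversions)
qed

lemma inv_count_Un_right:
  assumes "finite A" "B \<inter> C = {}"
  shows "inv_count A (B \<union> C) = inv_count A B + inv_count A C"
proof -
  have "{(i, j). i \<in> A \<and> j \<in> B \<union> C \<and> j < i} =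
        {(i, j). i \<in> A \<and> j \<in> B \<and> j < i} \<union> {(i, j). i \<in> A \<and> j \<in> C \<and> j < i}" by auto
  then show ?thesis
    unfolding inv_count_def using assms by (subst card_Un_disjoint[symmetric]) (auto simp: finite_inversions)
qed

lemma inv_count_insert_left:
  assumes "finite S" "a \<notin> S"
  shows "inv_count (insert a S) T = inv_count S T + card_below T a"
proof -
  have "{(i, j). i \<in> {a} \<and> j \<in> T \<and> j < i} = (\<lambda>j. (a, j)) ` {j\<in>T. j < a}" by auto
  then have "inv_count {a} T = card_below T a"
    unfolding inv_count_def card_below_def by (simp add: card_image inj_on_def)
  then show ?thesis using inv_count_Un_left[of "{a}" S T] assms by simp
qed

lemma inv_count_insert_right:
  assumes "finite S" "b \<notin> T"
  shows "inv_count S (insert b T) = inv_count S T + card_above S b"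
proof -
  have "{(i, j). i \<in> S \<and> j \<in> {b} \<and> j < i} = (\<lambda>i. (i, b)) ` {i\<in>S. b < i}" by auto
  then have "inv_count S {b} = card_above S b"
    unfolding inv_count_def card_above_def by (simp add: card_image inj_on_def)
  then show ?thesis using inv_count_Un_right[of S "{b}" T] assms by simp
qed

lemma card_below_Diff:
  assumes "S \<subseteq> T"
  shows "card_below T i = card_below S i + card_below (T - S) i"
proof -
  have "{j\<in>T. j < i} = {j\<in>S. j < i} \<union> {j\<in>T - S. j < i}" using assms by auto
  then show ?thesis unfolding card_below_def by (simp add: card_Un_disjoint disjoint_iff)
qed

lemma card_below_plus_above:
  assumes "finite S" "i \<notin> S"
  shows "card_below S i + card_above S i = card S"
proof -
  have "S = {j\<in>S. j < i} \<union> {j\<in>S. i < j}" using assms(2) by (auto simp: not_less_iff_gr_or_eq)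
  then have "card S = card ({j\<in>S. j < i} \<union> {j\<in>S. i < j})" by simp
  also have "\<dots> = card_below S i + card_above S i"
    unfolding card_below_def card_above_def using assms(1) by (subst card_Un_disjoint) auto
  finally show ?thesis by simp
qed

lemma card_below_insert:
  "k \<notin> T \<Longrightarrow> card_below (insert k T) i = card_below T i + (if k < i then 1 else 0)"
proof -
  assume "k \<notin> T"
  have "{j\<in>insert k T. j < i} = (if k < i then insert k {j\<in>T. j < i} else {j\<in>T. j < i})"
    by auto
  then show ?thesis unfolding card_below_def using \<open>k \<notin> T\<close> by simp
qed

lemma ksign_singletons: "a \<noteq> b \<Longrightarrow> ksign {a} {b} + (ksign {b} {a} :: 'a::comm_ring_1) = 0"
proof -
  have "{(i, j). i \<in> {a} \<and> j \<in> {b} \<and> j < i} = (if b < a then {(a, b)} else {})" for a b :: nat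
    by auto
  then show "a \<noteq> b \<Longrightarrow> ?thesis" by (auto simp: ksign_def)
qed

lemma ksign_insert_left:
  assumes "finite T" "S \<subseteq> T" "i \<notin> T"
  shows "(-1) ^ card_below T i * ksign (insert i S) (T - S)
    = ksign S (T - S) * ((-1::'a::comm_ring_1) ^ card_below S i)"
proof -
  have "finite S" "i \<notin> S" using assms by (auto intro: finite_subset)
  then have "inv_count (insert i S) (T - S) = inv_count S (T - S) + card_below (T - S) i"
    by (rule inv_count_insert_left)
  moreover have "card_below T i = card_below S i + card_below (T - S) i"
    using assms(2) by (rule card_below_Diff)
  ultimately show ?thesis
    unfolding ksign_inv_count power_add[symmetric] by (intro minus_one_power_parity_eq) presburger
qed

lemma ksign_insert_right:
  assumes "finite T" "S \<subseteq> T" "i \<notin> T"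
  shows "(-1) ^ card_below T i * ksign S (insert i (T - S))
    = ksign S (T - S) * (-1) ^ card S * ((-1::'a::comm_ring_1) ^ card_below (T - S) i)"
proof -
  have S: "finite S" "i \<notin> S" using assms by (auto intro: finite_subset)
  have "inv_count S (insert i (T - S)) = inv_count S (T - S) + card_above S i"
    using S assms by (intro inv_count_insert_right) auto
  moreover have "card_below T i = card_below S i + card_below (T - S) i"
    using assms(2) by (rule card_below_Diff)
  moreover have "card S = card_below S i + card_above S i"
    using card_below_plus_above[OF S] by simp
  ultimately show ?thesis
    unfolding ksign_inv_count power_add[symmetric] by (intro minus_one_power_parity_eq) presburger
qed

lemma ksign_insert_cancel:
  assumes "finite T" "S \<subseteq> T" "i \<notin> T"
  shows "ksign S (insert i (T - S)) * (-1) ^ card_below S i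
    + ksign (insert i S) (T - S) * (-1) ^ Suc (card S) * (-1) ^ card_below (T - S) i
    = (0::'a::comm_ring_1)"
proof -
  define \<epsilon> :: 'a where "\<epsilon> = (-1) ^ card_below T i"
  define K :: 'a where "K = ksign S (T - S)"
  define p :: 'a where "p = (-1) ^ card_below S i"
  define m :: 'a where "m = (-1) ^ card_below (T - S) i"
  define c :: 'a where "c = (-1) ^ card S"
  have left: "\<epsilon> * ksign (insert i S) (T - S) = K * p"
    unfolding \<epsilon>_def K_def p_def by (rule ksign_insert_left[OF assms])
  have right: "\<epsilon> * ksign S (insert i (T - S)) = K * c * m"
    unfolding \<epsilon>_def K_def c_def m_def by (rule ksign_insert_right[OF assms])
  have "\<epsilon> * (ksign S (insert i (T - S)) * p + ksign (insert i S) (T - S) * (- c) * m)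
      = (\<epsilon> * ksign S (insert i (T - S))) * p - (\<epsilon> * ksign (insert i S) (T - S)) * c * m"
    by (simp add: algebra_simps)
  also have "\<dots> = 0" unfolding left right by (simp add: mult_ac)
  finally have "\<epsilon> * \<epsilon> * (ksign S (insert i (T - S)) * p + ksign (insert i S) (T - S) * (- c) * m) = 0"
    by (metis mult.assoc mult_zero_right)
  moreover have "\<epsilon> * \<epsilon> = 1" unfolding \<epsilon>_def by (simp flip: power_add)
  ultimately show ?thesis unfolding p_def c_def m_def by simp
qed

section \<open>The exterior product\<close>

definition kscalar :: "'a::comm_ring_1 \<Rightarrow> 'a kelt" where
  "kscalar c = (\<lambda>U. if U = {} then c else 0)"

lemma kscalar_kdeg: "kscalar c \<in> kdeg r 0"
  by (auto simp: kdeg_def kelem_def kscalar_def)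

lemma wedge_infinite: "infinite U \<Longrightarrow> wedge x y U = 0"
  by (simp add: wedge_def)

lemma wedge_nonzero:
  assumes "wedge x y U \<noteq> 0"
  obtains S where "S \<subseteq> U" "x S \<noteq> 0" "y (U - S) \<noteq> 0" "finite U"
proof -
  have "finite U" using assms wedge_infinite by blast
  moreover obtain S where "S \<in> Pow U" "ksign S (U - S) * x S * y (U - S) \<noteq> 0"
    using assms unfolding wedge_def by (rule sum.not_neutral_contains_not_neutral)
  ultimately show ?thesis using that[of S] by (metis PowD mult_not_zero)
qed

lemma wedge_add_left: "wedge (\<lambda>U. x U + x' U) y = (\<lambda>U. wedge x y U + wedge x' y U)"
  by (simp add: wedge_def distrib_left distrib_right sum.distrib)

lemma wedge_add_right: "wedge x (\<lambda>U. y U + y' U) = (\<lambda>U. wedge x y U + wedge x y' U)"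
  by (simp add: wedge_def distrib_left distrib_right sum.distrib)

lemma wedge_smult_left: "wedge (\<lambda>U. c * x U) y = (\<lambda>U. c * wedge x y U)"
  unfolding wedge_def sum_distrib_left by (simp only: mult.left_commute mult.assoc)

lemma wedge_smult_right: "wedge x (\<lambda>U. c * y U) = (\<lambda>U. c * wedge x y U)"
  unfolding wedge_def sum_distrib_left by (simp only: mult.left_commute mult.assoc)

lemma wedge_neg_left: "wedge (\<lambda>U. - x U) y = (\<lambda>U. - wedge x y U)"
  by (simp add: wedge_def sum_negf)

lemma wedge_zero_left [simp]: "wedge (\<lambda>_. 0) y = (\<lambda>_. 0)"
  by (simp add: wedge_def)

lemma wedge_zero_right [simp]: "wedge x (\<lambda>_. 0) = (\<lambda>_. 0)"
  by (simp add: wedge_def)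

lemma wedge_sum_left:
  "wedge (\<lambda>U. \<Sum>p\<in>F. k p * g p U) y = (\<lambda>U. \<Sum>p\<in>F. k p * wedge (g p) y U)"
  unfolding wedge_def
  by (rule ext, simp add: sum_distrib_left sum_distrib_right mult_ac, rule sum.swap)

lemma wedge_sum_right:
  "wedge x (\<lambda>U. \<Sum>p\<in>F. k p * g p U) = (\<lambda>U. \<Sum>p\<in>F. k p * wedge x (g p) U)"
  unfolding wedge_def
  by (rule ext, simp add: sum_distrib_left sum_distrib_right mult_ac, rule sum.swap)

lemma module_hom_wedge_left:
  "module_hom (\<lambda>c x U. c * x U) (\<lambda>c x U. c * x U) (\<lambda>y. wedge y (x::'a::comm_ring_1 kelt))"
  by unfold_locales
    (simp_all add: fun_eq_iff distrib_left distrib_right plus_fun_def wedge_add_left wedge_smult_left)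

lemma module_hom_wedge_right:
  "module_hom (\<lambda>c x U. c * x U) (\<lambda>c x U. c * x U) (wedge (x::'a::comm_ring_1 kelt))"
  by unfold_locales
    (simp_all add: fun_eq_iff distrib_left distrib_right plus_fun_def wedge_add_right wedge_smult_right)

lemma wedge_kelem: assumes "x \<in> kelem r" "y \<in> kelem r" shows "wedge x y \<in> kelem r"
  unfolding kelem_def
proof (intro CollectI allI impI)
  fix U assume "wedge x y U \<noteq> 0"
  then obtain S where "S \<subseteq> U" "x S \<noteq> 0" "y (U - S) \<noteq> 0" by (rule wedge_nonzero)
  then show "U \<subseteq> {0..<r}" using assms unfolding kelem_def by blast
qed

lemma kdeg_add:
  assumes "x \<in> kdeg r i" "y \<in> kdeg r i"
  shows "(\<lambda>U. x U + y U) \<in> kdeg r i"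
proof -
  have "x U + y U \<noteq> 0 \<Longrightarrow> x U \<noteq> 0 \<or> y U \<noteq> 0" for U by auto
  then show ?thesis using assms unfolding kdeg_def kelem_def by blast
qed

lemma wedge_kdeg: assumes "x \<in> kdeg r i" "y \<in> kdeg r j" shows "wedge x y \<in> kdeg r (i + j)"
  unfolding kdeg_def
proof (intro CollectI conjI allI impI)
  show "wedge x y \<in> kelem r" using assms by (simp add: kdeg_def wedge_kelem)
  fix U assume "wedge x y U \<noteq> 0"
  then obtain S where S: "S \<subseteq> U" "x S \<noteq> 0" "y (U - S) \<noteq> 0" "finite U" by (rule wedge_nonzero)
  then have "card S = i" "card (U - S) = j" using assms unfolding kdeg_def by blast+
  moreover have "card (U - S) = card U - card S" "card S \<le> card U"
    using S by (auto intro: card_Diff_subset card_mono finite_subset)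
  ultimately show "card U = i + j" by simp
qed

lemma wedge_kscalar_left: "y \<in> kelem r \<Longrightarrow> wedge (kscalar c) y = (\<lambda>U. c * y U)"
proof (rule ext)
  fix U assume y: "y \<in> kelem r"
  show "wedge (kscalar c) y U = c * y U"
  proof (cases "finite U")
    case True
    have "wedge (kscalar c) y U = (\<Sum>S\<in>Pow U. if S = {} then ksign S (U - S) * c * y (U - S) else 0)"
      unfolding wedge_def kscalar_def by (rule sum.cong) auto
    then show ?thesis using True by (simp add: ksign_def)
  next
    case False
    then have "y U = 0" using y finite_subset[of U "{0..<r}"] by (auto simp: kelem_def)
    then show ?thesis using False by (simp add: wedge_infinite)
  qed
qed

lemma wedge_kscalar_right: "x \<in> kelem r \<Longrightarrow> wedge x (kscalar c) = (\<lambda>U. c * x U)"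
proof (rule ext)
  fix U assume x: "x \<in> kelem r"
  show "wedge x (kscalar c) U = c * x U"
  proof (cases "finite U")
    case True
    have "wedge x (kscalar c) U = (\<Sum>S\<in>Pow U. if S = U then ksign S (U - S) * x S * c else 0)"
      unfolding wedge_def kscalar_def by (rule sum.cong) auto
    then show ?thesis using True by (simp add: ksign_def mult.commute)
  next
    case False
    then have "x U = 0" using x finite_subset[of U "{0..<r}"] by (auto simp: kelem_def)
    then show ?thesis using False by (simp add: wedge_infinite)
  qed
qed

lemma wedge_assoc: "wedge (wedge x y) z = wedge x (wedge y z)"
proof (rule ext)
  fix U
  show "wedge (wedge x y) z U = wedge x (wedge y z) U"
  proof (cases "finite U")
    case False then show ?thesis by (simp add: wedge_infinite)
  next
    case fin: True
    define h1 where "h1 = (\<lambda>(S, A). ksign S (U - S) * ksign A (S - A) * x A * y (S - A) * z (U - S))"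
    define h2 where "h2 = (\<lambda>(A, B). ksign A (U - A) * ksign B (U - A - B) * x A * y B * z (U - A - B))"
    have "wedge (wedge x y) z U = (\<Sum>S\<in>Pow U. \<Sum>A\<in>Pow S. h1 (S, A))"
      unfolding wedge_def h1_def by (simp add: sum_distrib_left sum_distrib_right mult_ac)
    also have "\<dots> = (\<Sum>p\<in>Sigma (Pow U) Pow. h1 p)"
      using fin by (subst sum.Sigma) (auto intro: finite_subset)
    also have "\<dots> = (\<Sum>p\<in>Sigma (Pow U) (\<lambda>A. Pow (U - A)). h2 p)"
    proof (rule sym, rule sum.reindex_bij_witness[where j = "\<lambda>(A, B). (A \<union> B, A)"
        and i = "\<lambda>(S, A). (A, S - A)"])
      fix p assume "p \<in> Sigma (Pow U) (\<lambda>A. Pow (U - A))"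
      then obtain A B where p: "p = (A, B)" "A \<subseteq> U" "B \<subseteq> U - A" by auto
      have fA: "finite A" "finite B" "finite (U - A - B)" using p fin by (auto intro: finite_subset)
      have e1: "U - (A \<union> B) = U - A - B" "(A \<union> B) - A = B" using p by auto
      have e2: "U - A = B \<union> (U - A - B)" using p by auto
      have "inv_count (A \<union> B) (U - A - B) = inv_count A (U - A - B) + inv_count B (U - A - B)"
        using fA p by (intro inv_count_Un_left) auto
      moreover have "inv_count A (B \<union> (U - A - B)) = inv_count A B + inv_count A (U - A - B)"
        using fA p by (intro inv_count_Un_right) auto
      ultimately have "inv_count (A \<union> B) (U - A - B) + inv_count A B = inv_count A (U - A) + inv_count B (U - A - B)"
        unfolding e2[symmetric] by simp
      then show "h1 ((\<lambda>(A, B). (A \<union> B, A)) p) = h2 p"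
        unfolding h1_def h2_def p ksign_inv_count
        by (simp add: e1 power_add[symmetric] mult_ac)
    qed auto
    also have "\<dots> = (\<Sum>A\<in>Pow U. \<Sum>B\<in>Pow (U - A). h2 (A, B))"
      using fin by (subst sum.Sigma) (auto intro: finite_subset)
    also have "\<dots> = wedge x (wedge y z) U"
      unfolding wedge_def h2_def by (simp add: sum_distrib_left sum_distrib_right mult_ac Diff_Un)
    finally show ?thesis .
  qed
qed

lemma wedge_insert:
  assumes "finite T" "i \<notin> T"
  shows "wedge x y (insert i T) =
     (\<Sum>S\<in>Pow T. ksign S (insert i (T - S)) * x S * y (insert i (T - S))) +
     (\<Sum>S\<in>Pow T. ksign (insert i S) (T - S) * x (insert i S) * y (T - S))"
proof -
  have fin: "finite (Pow T)" "finite (insert i ` Pow T)" using assms by auto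
  have dis: "Pow T \<inter> insert i ` Pow T = {}" using assms by auto
  have inj: "inj_on (insert i) (Pow T)"
    using assms by (intro inj_onI) (auto simp: insert_ident)
  have "wedge x y (insert i T) = (\<Sum>S\<in>Pow T. ksign S (insert i T - S) * x S * y (insert i T - S)) +
        (\<Sum>S\<in>insert i ` Pow T. ksign S (insert i T - S) * x S * y (insert i T - S))"
    unfolding wedge_def Pow_insert by (rule sum.union_disjoint[OF fin dis])
  also have "(\<Sum>S\<in>insert i ` Pow T. ksign S (insert i T - S) * x S * y (insert i T - S))
     = (\<Sum>S\<in>Pow T. ksign (insert i S) (insert i T - insert i S) * x (insert i S) * y (insert i T - insert i S))"
    by (rule sum.reindex[OF inj, unfolded comp_def])
  also have "\<dots> = (\<Sum>S\<in>Pow T. ksign (insert i S) (T - S) * x (insert i S) * y (T - S))"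
    by (rule sum.cong) (use assms in auto)
  also have "(\<Sum>S\<in>Pow T. ksign S (insert i T - S) * x S * y (insert i T - S))
      = (\<Sum>S\<in>Pow T. ksign S (insert i (T - S)) * x S * y (insert i (T - S)))"
    by (intro sum.cong refl) (use assms in \<open>auto simp: insert_Diff_if\<close>)
  finally show ?thesis .
qed

lemma wedge_self_kdeg_one:
  assumes v: "v \<in> kdeg r 1"
  shows "wedge v v = (\<lambda>_. 0)"
proof (rule ext)
  fix U
  have card_v: "card S = 1" if "v S \<noteq> 0" for S using v that by (simp add: kdeg_def)
  show "wedge v v U = 0"
  proof (cases "finite U \<and> U \<noteq> {}")
    case False
    moreover have "v {} = 0" using card_v by force
    ultimately show ?thesis by (auto simp: wedge_infinite wedge_def)
  next
    case True
    show ?thesis unfolding wedge_def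
    proof (rule sum_involution_eq_0[where h = "\<lambda>S. U - S"])
      fix S assume S: "S \<in> Pow U"
      show "ksign (U - S) (U - (U - S)) * v (U - S) * v (U - (U - S)) +
            ksign S (U - S) * v S * v (U - S) = 0"
      proof (cases "v S = 0 \<or> v (U - S) = 0")
        case False
        then obtain a b where ab: "S = {a}" "U - S = {b}" using card_v by (meson card_1_singletonE)
        then have "a \<noteq> b" "U - (U - S) = S" using S by auto
        then have "ksign (U - S) (U - (U - S)) * v (U - S) * v (U - (U - S)) +
            ksign S (U - S) * v S * v (U - S) = (ksign {a} {b} + ksign {b} {a}) * (v S * v (U - S))"
          using ab by (simp add: algebra_simps)
        then show ?thesis using ksign_singletons[OF \<open>a \<noteq> b\<close>] by (metis mult_zero_left)
      qed (use S in \<open>auto simp: Diff_Diff_Int Int_absorb1\<close>)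
    qed (use True in auto)
  qed
qed

lemma wedge_commute_kdeg_one:
  assumes "v \<in> kdeg r 1" "w \<in> kdeg r 1"
  shows "wedge v w = (\<lambda>U. - wedge w v U)"
proof -
  have "wedge (\<lambda>U. v U + w U) (\<lambda>U. v U + w U) = (\<lambda>_. 0)"
    using assms by (intro wedge_self_kdeg_one kdeg_add)
  then show ?thesis
    using wedge_self_kdeg_one[OF assms(1)] wedge_self_kdeg_one[OF assms(2)]
    by (simp add: wedge_add_left wedge_add_right fun_eq_iff eq_neg_iff_add_eq_0)
qed

lemma wedge_coeff_in_ideal_left:
  "(\<And>S. u S \<in> ring_mod.span X) \<Longrightarrow> wedge u w U \<in> ring_mod.span X"
  unfolding wedge_def
  by (intro ring_mod.span_sum) (metis ring_mod.span_scale mult.commute mult.assoc)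

lemma wedge_coeff_in_ideal_right:
  "(\<And>S. w S \<in> ring_mod.span X) \<Longrightarrow> wedge u w U \<in> ring_mod.span X"
  unfolding wedge_def by (intro ring_mod.span_sum ring_mod.span_scale)

lemma wedge_span_closed:
  assumes closed: "\<And>p q. p \<in> P \<Longrightarrow> q \<in> P \<Longrightarrow> wedge p q \<in> kelt_mod.span P"
    and "x \<in> kelt_mod.span P" "y \<in> kelt_mod.span P"
  shows "wedge x y \<in> kelt_mod.span P"
proof -
  have image_span: "h ` kelt_mod.span P \<subseteq> kelt_mod.span P"
    if "module_hom (\<lambda>c x U. c * x U) (\<lambda>c x U. c * x U) h" "h ` P \<subseteq> kelt_mod.span P" for h
  proof -
    have "kelt_mod.span (h ` P) \<subseteq> kelt_mod.span P"
      using that(2) by (rule kelt_mod.span_minimal) simp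
    then show ?thesis using module_hom.span_image[OF that(1)] by simp
  qed
  have "wedge p y \<in> kelt_mod.span P" if "p \<in> P" for p
    using image_span[OF module_hom_wedge_right] closed that assms(3) by blast
  then show ?thesis
    using image_span[OF module_hom_wedge_left, of y] assms(2) by blast
qed

section \<open>The Koszul differential\<close>

lemma kd_add: "kd r f (\<lambda>U. x U + y U) = (\<lambda>T. kd r f x T + kd r f y T)"
  by (simp add: kd_def distrib_left sum.distrib)

lemma kd_smult: "kd r f (\<lambda>U. c * x U) = (\<lambda>T. c * kd r f x T)"
  by (simp add: kd_def sum_distrib_left mult.left_commute)

lemma kd_kscalar: "kd r f (kscalar c) = (\<lambda>_. 0)"
  by (simp add: kd_def kscalar_def)

lemma kd_kdeg:
  assumes "x \<in> kdeg r (Suc i)"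
  shows "kd r f x \<in> kdeg r i"
proof -
  have "T \<subseteq> {0..<r} \<and> card T = i" if nz: "kd r f x T \<noteq> 0" for T
  proof -
    obtain k where k: "k \<in> {0..<r} - T"
        "(-1) ^ card {j\<in>T. j < k} * f k * x (insert k T) \<noteq> 0"
      using nz unfolding kd_def by (rule sum.not_neutral_contains_not_neutral)
    then have "x (insert k T) \<noteq> 0" by auto
    then have "insert k T \<subseteq> {0..<r}" "card (insert k T) = Suc i"
      using assms unfolding kdeg_def kelem_def by blast+
    then show ?thesis using k(1) by (auto simp: finite_subset)
  qed
  then show ?thesis unfolding kdeg_def kelem_def by blast
qed

(* Contraction with the dual basis vector of e_i.  Since kd = sum_i f_i kcontract i and each
   contraction is an antiderivation, kd satisfies the Leibniz rule. *)
definition kcontract :: "nat \<Rightarrow> 'a::comm_ring_1 kelt \<Rightarrow> 'a kelt" where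
  "kcontract i x = (\<lambda>T. if i \<in> T then 0 else (-1) ^ card_below T i * x (insert i T))"

definition kinvol :: "'a::comm_ring_1 kelt \<Rightarrow> 'a kelt" where
  "kinvol x = (\<lambda>U. (-1) ^ card U * x U)"

lemma kd_eq_sum_kcontract: "kd r f x = (\<lambda>T. \<Sum>i<r. f i * kcontract i x T)"
proof (rule ext)
  fix T
  have "(\<Sum>i<r. f i * kcontract i x T)
      = (\<Sum>i<r. if i \<notin> T then (-1) ^ card {j\<in>T. j < i} * f i * x (insert i T) else 0)"
    by (rule sum.cong) (auto simp: kcontract_def card_below_def)
  also have "\<dots> = (\<Sum>i\<in>{i\<in>{..<r}. i \<notin> T}. (-1) ^ card {j\<in>T. j < i} * f i * x (insert i T))"
    by (rule sum.inter_filter[symmetric]) simp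
  also have "{i\<in>{..<r}. i \<notin> T} = {0..<r} - T" by auto
  finally show "kd r f x T = (\<Sum>i<r. f i * kcontract i x T)" by (simp add: kd_def)
qed

lemma kcontract_wedge_notin:
  fixes x y :: "'a::comm_ring_1 kelt"
  assumes T: "finite T" "i \<notin> T"
  shows "kcontract i (wedge x y) T = wedge (kcontract i x) y T + wedge (kinvol x) (kcontract i y) T"
proof -
  define \<epsilon> :: 'a where "\<epsilon> = (-1) ^ card_below T i"
  have "kcontract i (wedge x y) T
      = (\<Sum>S\<in>Pow T. \<epsilon> * ksign S (insert i (T - S)) * x S * y (insert i (T - S)))
      + (\<Sum>S\<in>Pow T. \<epsilon> * ksign (insert i S) (T - S) * x (insert i S) * y (T - S))"
    unfolding kcontract_def wedge_insert[OF T] \<epsilon>_def using T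
    by (simp add: sum_distrib_left distrib_left mult.assoc)
  also have "(\<Sum>S\<in>Pow T. \<epsilon> * ksign S (insert i (T - S)) * x S * y (insert i (T - S)))
      = wedge (kinvol x) (kcontract i y) T"
    unfolding wedge_def kinvol_def kcontract_def
  proof (intro sum.cong refl)
    fix S assume "S \<in> Pow T"
    then have "\<epsilon> * ksign S (insert i (T - S))
        = ksign S (T - S) * (-1) ^ card S * (-1) ^ card_below (T - S) i"
      unfolding \<epsilon>_def using T by (intro ksign_insert_right) auto
    then show "\<epsilon> * ksign S (insert i (T - S)) * x S * y (insert i (T - S))
      = ksign S (T - S) * ((-1) ^ card S * x S) * (if i \<in> T - S then 0
          else (-1) ^ card_below (T - S) i * y (insert i (T - S)))"
      using T by (simp add: mult.assoc[symmetric])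
  qed
  also have "(\<Sum>S\<in>Pow T. \<epsilon> * ksign (insert i S) (T - S) * x (insert i S) * y (T - S))
      = wedge (kcontract i x) y T"
    unfolding wedge_def kcontract_def
  proof (intro sum.cong refl)
    fix S assume S: "S \<in> Pow T"
    then have "\<epsilon> * ksign (insert i S) (T - S) = ksign S (T - S) * (-1) ^ card_below S i"
      unfolding \<epsilon>_def using T by (intro ksign_insert_left) auto
    then show "\<epsilon> * ksign (insert i S) (T - S) * x (insert i S) * y (T - S)
      = ksign S (T - S) * (if i \<in> S then 0 else (-1) ^ card_below S i * x (insert i S)) * y (T - S)"
      using S T by (auto simp: mult.assoc[symmetric])
  qed
  finally show ?thesis by (simp add: add.commute)
qed

lemma kcontract_wedge_in:
  fixes x y :: "'a::comm_ring_1 kelt"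
  assumes "finite T" "i \<in> T"
  shows "wedge (kcontract i x) y T + wedge (kinvol x) (kcontract i y) T = 0"
proof -
  define T' where "T' = T - {i}"
  have T': "finite T'" "i \<notin> T'" "T = insert i T'" using assms by (auto simp: T'_def)
  define xy where "xy = (\<lambda>S. x (insert i S) * y (insert i (T' - S)))"
  have "wedge (kcontract i x) y T
      = (\<Sum>S\<in>Pow T'. ksign S (insert i (T' - S)) * (-1) ^ card_below S i * xy S)"
    unfolding T'(3) wedge_insert[OF T'(1,2)] using T'(2)
    by (auto intro!: sum.cong simp: kcontract_def xy_def mult_ac)
  moreover have "wedge (kinvol x) (kcontract i y) T
      = (\<Sum>S\<in>Pow T'. ksign (insert i S) (T' - S) * (-1) ^ Suc (card S)
          * (-1) ^ card_below (T' - S) i * xy S)"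
    unfolding T'(3) wedge_insert[OF T'(1,2)] using T'
    by (auto intro!: sum.cong simp: kcontract_def kinvol_def xy_def mult_ac finite_subset
        card_insert_if subset_iff)
  ultimately have "wedge (kcontract i x) y T + wedge (kinvol x) (kcontract i y) T
      = (\<Sum>S\<in>Pow T'. (ksign S (insert i (T' - S)) * (-1) ^ card_below S i
          + ksign (insert i S) (T' - S) * (-1) ^ Suc (card S) * (-1) ^ card_below (T' - S) i) * xy S)"
    by (simp add: sum.distrib[symmetric] distrib_right left_diff_distrib)
  also have "\<dots> = 0"
  proof (intro sum.neutral ballI)
    fix S assume "S \<in> Pow T'"
    then have "ksign S (insert i (T' - S)) * (-1) ^ card_below S i
        + ksign (insert i S) (T' - S) * (-1) ^ Suc (card S) * (-1) ^ card_below (T' - S) i = 0"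
      using T' by (intro ksign_insert_cancel) auto
    then show "(ksign S (insert i (T' - S)) * (-1) ^ card_below S i
        + ksign (insert i S) (T' - S) * (-1) ^ Suc (card S) * (-1) ^ card_below (T' - S) i) * xy S = 0"
      by (metis mult_zero_left)
  qed
  finally show ?thesis .
qed

lemma kcontract_wedge:
  "kcontract i (wedge x y) = (\<lambda>T. wedge (kcontract i x) y T + wedge (kinvol x) (kcontract i y) T)"
proof (rule ext)
  fix T
  consider "infinite T" | "finite T" "i \<in> T" | "finite T" "i \<notin> T" by blast
  then show "kcontract i (wedge x y) T = wedge (kcontract i x) y T + wedge (kinvol x) (kcontract i y) T"
  proof cases
    case 1
    then show ?thesis by (simp add: kcontract_def wedge_infinite)
  next
    case 2
    then show ?thesis using kcontract_wedge_in[of T i x y] by (simp add: kcontract_def)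
  next
    case 3
    then show ?thesis by (rule kcontract_wedge_notin)
  qed
qed

lemma kd_wedge:
  "kd r f (wedge x y) = (\<lambda>T. wedge (kd r f x) y T + wedge (kinvol x) (kd r f y) T)"
  by (simp add: kd_eq_sum_kcontract kcontract_wedge wedge_sum_left wedge_sum_right
      distrib_left sum.distrib)

lemma kd_kd: "kd r f (kd r f x) = (\<lambda>_. 0)"
proof (rule ext)
  fix T
  define g where "g = (\<lambda>(i, k). (-1) ^ card_below T i * f i *
      ((-1) ^ card_below (insert i T) k * f k * x (insert k (insert i T))))"
  have "kd r f (kd r f x) T = (\<Sum>i\<in>{0..<r} - T. \<Sum>k\<in>{0..<r} - insert i T. g (i, k))"
    unfolding kd_def g_def card_below_def by (simp add: sum_distrib_left)
  also have "\<dots> = (\<Sum>p\<in>Sigma ({0..<r} - T) (\<lambda>i. {0..<r} - insert i T). g p)"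
    by (subst sum.Sigma) auto
  also have "\<dots> = 0"
  proof (rule sum_involution_eq_0[where h = "\<lambda>(i, k). (k, i)"])
    fix p assume "p \<in> Sigma ({0..<r} - T) (\<lambda>i. {0..<r} - insert i T)"
    then obtain i k where ik: "p = (i, k)" "i \<notin> T" "k \<notin> T" "i \<noteq> k" by auto
    have "insert i (insert k T) = insert k (insert i T)" by auto
    then have "g (k, i) + g (i, k)
      = ((-1) ^ (if k < i then 1 else 0) + (-1) ^ (if i < k then 1 else 0)) *
        ((-1) ^ (card_below T i + card_below T k) * f i * f k * x (insert k (insert i T)))"
      unfolding g_def case_prod_conv card_below_insert[OF ik(2)] card_below_insert[OF ik(3)]
      by (simp only: power_add algebra_simps)
    also have "\<dots> = 0" using \<open>i \<noteq> k\<close> by (cases "i < k") auto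
    finally show "g ((\<lambda>(i, k). (k, i)) p) + g p = 0" using ik by simp
  qed auto
  finally show "kd r f (kd r f x) T = 0" .
qed

lemma kinvol_kdeg:
  assumes "x \<in> kdeg r j"
  shows "kinvol x = (\<lambda>U. (-1) ^ j * x U)"
proof (rule ext)
  fix U
  show "kinvol x U = (-1) ^ j * x U"
    using assms by (cases "x U = 0") (auto simp: kinvol_def kdeg_def)
qed

(* kd vanishes in top degree, so the Leibniz rule moves kd from one factor to the other. *)
lemma wedge_kd_top:
  assumes "x \<in> kdeg r j"
  shows "wedge x (kd r f w) {0..<r} = - ((-1) ^ j * wedge (kd r f x) w {0..<r})"
proof -
  have "0 = kd r f (wedge x w) {0..<r}" by (simp add: kd_def)
  also have "\<dots> = wedge (kd r f x) w {0..<r} + (-1) ^ j * wedge x (kd r f w) {0..<r}"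
    by (simp add: kd_wedge kinvol_kdeg[OF assms] wedge_smult_left)
  finally have "(-1) ^ j * wedge x (kd r f w) {0..<r} = - wedge (kd r f x) w {0..<r}"
    by (simp add: eq_neg_iff_add_eq_0 add.commute)
  then have "(-1) ^ j * (-1) ^ j * wedge x (kd r f w) {0..<r} = - ((-1) ^ j * wedge (kd r f x) w {0..<r})"
    by (metis mult.assoc mult_minus_right)
  then show ?thesis by (simp flip: power_add)
qed

section \<open>The subalgebra Gamma\<close>

lemma zeta_apply: "zeta r c j U = (if \<exists>i<r. U = {i} then c (the_elem U) j else 0)"
proof (cases "\<exists>i<r. U = {i}")
  case True
  then obtain i where "i < r" "U = {i}" by blast
  then show ?thesis unfolding zeta_def by (simp add: sum.delta')
next
  case False
  then show ?thesis unfolding zeta_def by (auto intro: sum.neutral)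
qed

lemma zeta_kdeg: "zeta r c j \<in> kdeg r 1"
  unfolding kdeg_def kelem_def zeta_apply by auto

lemma kd_zeta: "kd r f (zeta r c j) T = (if T = {} then (\<Sum>i<r. c i j * f i) else 0)"
proof (cases "T = {}")
  case True
  then show ?thesis by (simp add: kd_def zeta_apply atLeast0LessThan mult.commute)
next
  case False
  then have "\<not> T \<subseteq> {i}" if "i \<notin> T" for i
    using that by (auto simp: subset_singleton_iff)
  then show ?thesis using False unfolding kd_def zeta_apply by (auto intro!: sum.neutral)
qed

lemma Gamma_kd_in_ideal:
  assumes a: "\<forall>j<s. a j = (\<Sum>i<r. c i j * f i)"
    and x: "x \<in> Gamma r s c"
  shows "kd r f x T \<in> ring_mod.span (a ` {..<s})"
  using x unfolding Gamma_def
proof (induction arbitrary: T rule: subalg.induct)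
  case (gen g)
  then obtain j where j: "j < s" "g = zeta r c j" by auto
  then have "kd r f g T = (if T = {} then a j else 0)" using a by (simp add: kd_zeta)
  then show ?case using j by (simp add: ring_mod.span_base ring_mod.span_zero)
next
  case (scalar c')
  then show ?case using kd_kscalar[of r f c'] by (simp add: kscalar_def ring_mod.span_zero)
next
  case (add x y)
  then show ?case by (simp add: kd_add ring_mod.span_add)
next
  case (smult x c')
  then show ?case by (simp add: kd_smult ring_mod.span_scale)
next
  case (mult x y)
  then show ?case
    by (simp add: kd_wedge ring_mod.span_add wedge_coeff_in_ideal_left wedge_coeff_in_ideal_right)
qed

lemma Gamma_wedge_boundary_in_ideal:
  assumes "\<forall>j<s. a j = (\<Sum>i<r. c i j * f i)"
    and "x \<in> Gamma r s c" "x \<in> kdeg r j"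
  shows "wedge x (kd r f w) {0..<r} \<in> ring_mod.span (a ` {..<s})"
  unfolding wedge_kd_top[OF assms(3)]
  by (intro ring_mod.span_neg ring_mod.span_scale
      wedge_coeff_in_ideal_left[OF Gamma_kd_in_ideal[OF assms(1,2)]])

definition zeta_monomial :: "nat \<Rightarrow> (nat \<Rightarrow> nat \<Rightarrow> 'a::comm_ring_1) \<Rightarrow> nat list \<Rightarrow> 'a kelt" where
  "zeta_monomial r c L = foldr (\<lambda>j m. wedge (zeta r c j) m) L (kscalar 1)"

lemma zeta_monomial_Nil [simp]: "zeta_monomial r c [] = kscalar 1"
  by (simp add: zeta_monomial_def)

lemma zeta_monomial_Cons [simp]:
  "zeta_monomial r c (j # L) = wedge (zeta r c j) (zeta_monomial r c L)"
  by (simp add: zeta_monomial_def)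

lemma zeta_monomial_kdeg: "zeta_monomial r c L \<in> kdeg r (length L)"
  by (induction L) (auto simp: kscalar_kdeg dest: wedge_kdeg[OF zeta_kdeg])

lemma zeta_monomial_append:
  "zeta_monomial r c (L @ M) = wedge (zeta_monomial r c L) (zeta_monomial r c M)"
proof (induction L)
  case Nil
  have "zeta_monomial r c M \<in> kelem r" using zeta_monomial_kdeg[of r c M] by (simp add: kdeg_def)
  then show ?case by (simp add: wedge_kscalar_left)
next
  case (Cons j L)
  then show ?case by (simp add: wedge_assoc)
qed

lemma zeta_monomial_repeat: "zeta_monomial r c (k # B @ k # M) = (\<lambda>_. 0)"
proof (induction B)
  case Nil
  show ?case by (simp flip: wedge_assoc add: wedge_self_kdeg_one[OF zeta_kdeg])
next
  case (Cons b B)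
  have "zeta_monomial r c (k # (b # B) @ k # M)
      = wedge (wedge (zeta r c k) (zeta r c b)) (zeta_monomial r c (B @ k # M))"
    by (simp add: wedge_assoc)
  also have "\<dots> = (\<lambda>U. - wedge (zeta r c b) (zeta_monomial r c (k # B @ k # M)) U)"
    by (simp add: wedge_commute_kdeg_one[OF zeta_kdeg zeta_kdeg, of r c k] wedge_neg_left wedge_assoc)
  finally show ?case using Cons.IH by simp
qed

lemma zeta_monomial_not_distinct:
  assumes "\<not> distinct L"
  shows "zeta_monomial r c L = (\<lambda>_. 0)"
proof -
  obtain xs k ys zs where "L = xs @ [k] @ ys @ [k] @ zs"
    using not_distinct_decomp[OF assms] by blast
  then have "zeta_monomial r c L = wedge (zeta_monomial r c xs) (zeta_monomial r c (k # ys @ k # zs))"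
    by (simp only: zeta_monomial_append append_Cons append_Nil)
  then show ?thesis by (simp only: zeta_monomial_repeat wedge_zero_right)
qed

definition zeta_monomials :: "nat \<Rightarrow> nat \<Rightarrow> (nat \<Rightarrow> nat \<Rightarrow> 'a::comm_ring_1) \<Rightarrow> 'a kelt set" where
  "zeta_monomials r s c = {zeta_monomial r c L | L. distinct L \<and> set L \<subseteq> {..<s}}"

lemma wedge_zeta_monomials:
  assumes "p \<in> zeta_monomials r s c" "q \<in> zeta_monomials r s c"
  shows "wedge p q \<in> kelt_mod.span (zeta_monomials r s c)"
proof -
  obtain L M where LM: "p = zeta_monomial r c L" "q = zeta_monomial r c M"
    "set L \<subseteq> {..<s}" "set M \<subseteq> {..<s}"
    using assms unfolding zeta_monomials_def by blast
  show ?thesis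
  proof (cases "distinct (L @ M)")
    case True
    then have "zeta_monomial r c (L @ M) \<in> zeta_monomials r s c"
      unfolding zeta_monomials_def using LM by (intro CollectI exI[of _ "L @ M"]) auto
    then show ?thesis using LM by (simp add: zeta_monomial_append kelt_mod.span_base)
  next
    case False
    then show ?thesis using LM kelt_mod.span_zero
      by (simp add: zeta_monomial_append[symmetric] zeta_monomial_not_distinct zero_fun_def)
  qed
qed

lemma Gamma_subset_span_zeta_monomials: "Gamma r s c \<subseteq> kelt_mod.span (zeta_monomials r s c)"
proof
  fix x assume "x \<in> Gamma r s c"
  then show "x \<in> kelt_mod.span (zeta_monomials r s c)"
    unfolding Gamma_def
  proof (induction rule: subalg.induct)
    case (gen g)
    then obtain j where j: "j < s" "g = zeta r c j" by auto
    have "zeta r c j \<in> kelem r" using zeta_kdeg[of r c j] by (simp add: kdeg_def)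
    then have "g = zeta_monomial r c [j]" using j by (simp add: wedge_kscalar_right)
    then show ?case
      unfolding zeta_monomials_def using j by (intro kelt_mod.span_base CollectI exI[of _ "[j]"]) auto
  next
    case (scalar c')
    have "zeta_monomial r c [] \<in> zeta_monomials r s c"
      unfolding zeta_monomials_def by (intro CollectI exI[of _ "[]"]) auto
    moreover have "(\<lambda>U. if U = {} then c' else 0) = (\<lambda>U. c' * zeta_monomial r c [] U)"
      by (simp add: kscalar_def fun_eq_iff)
    ultimately show ?case by (simp only:) (intro kelt_mod.span_scale kelt_mod.span_base)
  next
    case (add x y)
    show ?case using kelt_mod.span_add[OF add.IH] by (simp add: plus_fun_def)
  next
    case (smult x c')
    show ?case using kelt_mod.span_scale[OF smult.IH, of c'] by simp
  next
    case (mult x y)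
    show ?case by (rule wedge_span_closed[OF wedge_zeta_monomials mult.IH])
  qed
qed

lemma Gamma_kdeg_above_vanish:
  assumes "x \<in> Gamma r s c" "x \<in> kdeg r j" "s < j"
  shows "x = (\<lambda>_. 0)"
proof (rule ext)
  fix U
  show "x U = 0"
  proof (cases "card U = j")
    case True
    have "p U = 0" if p: "p \<in> zeta_monomials r s c" for p
    proof -
      obtain L where L: "p = zeta_monomial r c L" "distinct L" "set L \<subseteq> {..<s}"
        using p unfolding zeta_monomials_def by blast
      have "length L = card (set L)" using L(2) by (simp add: distinct_card)
      also have "\<dots> \<le> card {..<s}" by (rule card_mono[OF finite_lessThan L(3)])
      finally have "length L \<noteq> card U" using True assms(3) by simp
      moreover have "\<forall>S. p S \<noteq> 0 \<longrightarrow> card S = length L"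
        using zeta_monomial_kdeg[of r c L] L(1) by (simp add: kdeg_def)
      ultimately show ?thesis by auto
    qed
    then have "(\<lambda>z. z U) ` zeta_monomials r s c \<subseteq> {0}" by blast
    then have "ring_mod.span ((\<lambda>z. z U) ` zeta_monomials r s c) \<subseteq> {0}"
      by (rule ring_mod.span_minimal) (simp add: ring_mod.subspace_def)
    moreover have "x U \<in> (\<lambda>z. z U) ` kelt_mod.span (zeta_monomials r s c)"
      using Gamma_subset_span_zeta_monomials assms(1) by blast
    ultimately show ?thesis by (auto simp: coeff_span)
  next
    case False
    then show ?thesis using assms(2) unfolding kdeg_def by blast
  qed
qed

section \<open>Cycles and homology\<close>

lemma subalg_subset_kcycles:
  assumes "G \<subseteq> kcycles r f"
  shows "subalg G \<subseteq> kcycles r f"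
proof
  fix x assume "x \<in> subalg G"
  then show "x \<in> kcycles r f"
  proof (induction rule: subalg.induct)
    case (gen g)
    then show ?case using assms by blast
  next
    case (scalar c)
    then show ?case
      using kscalar_kdeg[of c r] kd_kscalar[of r f c] by (simp add: kcycles_def kdeg_def kscalar_def)
  next
    case (add x y)
    have "x U + y U \<noteq> 0 \<Longrightarrow> x U \<noteq> 0 \<or> y U \<noteq> 0" for U by auto
    then show ?case using add.IH unfolding kcycles_def kelem_def by (simp add: kd_add) blast
  next
    case (smult x c)
    have "c * x U \<noteq> 0 \<Longrightarrow> x U \<noteq> 0" for U by auto
    then show ?case using smult.IH unfolding kcycles_def kelem_def by (simp add: kd_smult)
  next
    case (mult x y)
    then show ?case by (simp add: kcycles_def wedge_kelem kd_wedge)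
  qed
qed

lemma Htilde_subset_kcycles:
  assumes "koszul_reps r f rep"
  shows "Htilde r f rep \<subseteq> kcycles r f"
  unfolding Htilde_def using assms
  by (intro subalg_subset_kcycles) (auto simp: koszul_reps_def)

lemma koszul_reps_decomp:
  assumes "koszul_reps r f rep" "z \<in> kdeg r i \<inter> kcycles r f"
  obtains w where "z = (\<lambda>U. rep i z U + kd r f w U)"
proof -
  obtain w where "(\<lambda>U. z U - rep i z U) = kd r f w"
    using assms unfolding koszul_reps_def kbound_def by blast
  then have "z U = rep i z U + kd r f w U" for U by (metis diff_add_cancel add.commute)
  then show ?thesis using that by blast
qed

lemma koszul_H_nonzero_kgrade:
  assumes "i \<le> r" "koszul_H_nonzero r f i"
  shows "enat i + kgrade r f \<le> enat r"
proof -
  define M where "M = {i. i \<le> r \<and> koszul_H_nonzero r f i}"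
  have "finite M" "i \<in> M" using assms unfolding M_def by auto
  then have "i \<le> Max M" "Max M \<in> M" by (auto intro: Max_in)
  then have "i \<le> Max M" "Max M \<le> r" unfolding M_def by auto
  moreover have "kgrade r f = enat (r - Max M)" unfolding kgrade_def M_def using assms by auto
  ultimately show ?thesis by simp
qed

definition top_basis :: "nat \<Rightarrow> 'a::comm_ring_1 kelt" where
  "top_basis r = (\<lambda>U. if U = {0..<r} then 1 else 0)"

lemma top_basis_kdeg: "top_basis r \<in> kdeg r r"
  by (simp add: kdeg_def kelem_def top_basis_def)

lemma wedge_top_basis: "wedge u (top_basis r) {0..<r} = u {}"
proof -
  have "wedge u (top_basis r) {0..<r}
      = (\<Sum>S\<in>Pow {0..<r}. if S = {} then ksign S ({0..<r} - S) * u S else 0)"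
    unfolding wedge_def top_basis_def by (rule sum.cong) auto
  then show ?thesis by (simp add: ksign_def)
qed

section \<open>Top-degree ideals\<close>

definition top_gens :: "nat \<Rightarrow> 'a::comm_ring_1 kelt set \<Rightarrow> 'a kelt set \<Rightarrow> nat \<Rightarrow> 'a set" where
  "top_gens r A B j = {wedge x y {0..<r} | x y. x \<in> A \<inter> kdeg r j \<and> y \<in> B \<inter> kdeg r (r - j)}"

lemma top_gens_mono: "B \<subseteq> B' \<Longrightarrow> top_gens r A B j \<subseteq> top_gens r A B' j"
  unfolding top_gens_def by blast

lemma top_ideal_deg_eq_span: "top_ideal_deg r A B j = ring_mod.span (top_gens r A B j)"
  unfolding top_ideal_deg_def kspan_eq_span coeff_span top_gens_def
  by (rule arg_cong[where f = ring_mod.span]) blast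

lemma top_ideal_eq_span: "top_ideal r A B = ring_mod.span (\<Union>j\<le>r. top_gens r A B j)"
  unfolding top_ideal_def kspan_eq_span coeff_span top_gens_def
  by (rule arg_cong[where f = ring_mod.span]) blast

(* a_j is the top coefficient of zeta_j wedge d(e_0 ... e_{r-1}). *)
lemma generator_in_kitt:
  assumes "a j = (\<Sum>i<r. c i j * f i)" "j < s"
  shows "a j \<in> ring_mod.span (\<Union>k\<le>r. top_gens r (Gamma r s c) (kcycles r f) k)"
proof (cases r)
  case 0
  then show ?thesis using assms(1) by (simp add: ring_mod.span_zero)
next
  case (Suc r')
  have "a j = wedge (kd r f (zeta r c j)) (top_basis r) {0..<r}"
    using assms(1) by (simp add: wedge_top_basis kd_zeta)
  also have "\<dots> = wedge (zeta r c j) (kd r f (top_basis r)) {0..<r}"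
    by (simp add: wedge_kd_top[OF zeta_kdeg])
  finally have "a j = wedge (zeta r c j) (kd r f (top_basis r)) {0..<r}" .
  moreover have "zeta r c j \<in> Gamma r s c \<inter> kdeg r 1"
    using assms(2) zeta_kdeg[of r c j] unfolding Gamma_def by (auto intro: subalg.gen)
  moreover have "kd r f (top_basis r) \<in> kcycles r f \<inter> kdeg r (r - 1)"
    using kd_kdeg[of "top_basis r" r r' f] top_basis_kdeg[of r] Suc
    by (simp add: kcycles_def kdeg_def kd_kd)
  ultimately have "a j \<in> top_gens r (Gamma r s c) (kcycles r f) 1"
    unfolding top_gens_def by blast
  then show ?thesis using Suc by (auto intro: ring_mod.span_base)
qed

lemma top_gen_cycle_in_span:
  assumes a: "\<forall>j<s. a j = (\<Sum>i<r. c i j * f i)" and reps: "koszul_reps r f rep"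
    and v: "v \<in> top_gens r (Gamma r s c) (kcycles r f) j"
  shows "v \<in> ring_mod.span (a ` {..<s} \<union> top_gens r (Gamma r s c) (Htilde r f rep) j)"
proof -
  obtain x z where xz: "v = wedge x z {0..<r}" "x \<in> Gamma r s c \<inter> kdeg r j"
      "z \<in> kdeg r (r - j) \<inter> kcycles r f"
    using v unfolding top_gens_def by blast
  define y where "y = rep (r - j) z"
  obtain w where "z = (\<lambda>U. y U + kd r f w U)"
    using koszul_reps_decomp[OF reps xz(3)] unfolding y_def by blast
  then have v_eq: "v = wedge x y {0..<r} + wedge x (kd r f w) {0..<r}"
    using xz(1) by (simp add: wedge_add_right)
  let ?S = "a ` {..<s} \<union> top_gens r (Gamma r s c) (Htilde r f rep) j"
  have "y \<in> Htilde r f rep \<inter> kdeg r (r - j)"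
    using reps xz(3) unfolding y_def Htilde_def koszul_reps_def by (blast intro: subalg.gen)
  then have "wedge x y {0..<r} \<in> ring_mod.span ?S"
    using xz(2) unfolding top_gens_def by (blast intro: ring_mod.span_base)
  moreover have "wedge x (kd r f w) {0..<r} \<in> ring_mod.span (a ` {..<s})"
    using Gamma_wedge_boundary_in_ideal[OF a] xz(2) by blast
  then have "wedge x (kd r f w) {0..<r} \<in> ring_mod.span ?S"
    using ring_mod.span_mono[of "a ` {..<s}" ?S] by blast
  ultimately show ?thesis unfolding v_eq by (rule ring_mod.span_add)
qed

lemma kitt_eq_span_Htilde:
  assumes a: "\<forall>j<s. a j = (\<Sum>i<r. c i j * f i)" and reps: "koszul_reps r f rep"
  shows "kitt r s c f = ring_mod.span
    (a ` {..<s} \<union> (\<Union>j\<le>r. top_gens r (Gamma r s c) (Htilde r f rep) j))"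
  unfolding kitt_def top_ideal_eq_span ring_mod.span_eq
proof (intro conjI subsetI)
  fix v assume "v \<in> (\<Union>j\<le>r. top_gens r (Gamma r s c) (kcycles r f) j)"
  then obtain j where "j \<le> r" "v \<in> top_gens r (Gamma r s c) (kcycles r f) j" by blast
  moreover have "ring_mod.span (a ` {..<s} \<union> top_gens r (Gamma r s c) (Htilde r f rep) j)
      \<subseteq> ring_mod.span (a ` {..<s} \<union> (\<Union>j\<le>r. top_gens r (Gamma r s c) (Htilde r f rep) j))"
    using \<open>j \<le> r\<close> by (intro ring_mod.span_mono) blast
  ultimately show "v \<in> ring_mod.span (a ` {..<s} \<union> (\<Union>j\<le>r. top_gens r (Gamma r s c) (Htilde r f rep) j))"
    using top_gen_cycle_in_span[OF a reps] by blast
next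
  fix v assume "v \<in> a ` {..<s} \<union> (\<Union>j\<le>r. top_gens r (Gamma r s c) (Htilde r f rep) j)"
  then show "v \<in> ring_mod.span (\<Union>j\<le>r. top_gens r (Gamma r s c) (kcycles r f) j)"
  proof
    assume "v \<in> a ` {..<s}"
    then show ?thesis using generator_in_kitt a by blast
  next
    assume "v \<in> (\<Union>j\<le>r. top_gens r (Gamma r s c) (Htilde r f rep) j)"
    then show ?thesis
      using top_gens_mono[OF Htilde_subset_kcycles[OF reps]] by (blast intro: ring_mod.span_base)
  qed
qed

(* Gamma vanishes in degrees above s, and when H_{r-j} = 0 the cycle is a boundary, so the
   product lies in the ideal a. *)
lemma top_gen_Htilde_in_admissible_span:
  assumes a: "\<forall>j<s. a j = (\<Sum>i<r. c i j * f i)" and reps: "koszul_reps r f rep"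
    and v: "v \<in> top_gens r (Gamma r s c) (Htilde r f rep) j" and "j \<le> r"
  shows "v \<in> ring_mod.span (a ` {..<s} \<union>
    (\<Union>i\<in>{i. r - s \<le> i \<and> enat i + kgrade r f \<le> enat r}. top_gens r (Gamma r s c) (Htilde r f rep) (r - i)))"
    (is "v \<in> ring_mod.span (_ \<union> ?G)")
proof -
  obtain x y where xy: "v = wedge x y {0..<r}" "x \<in> Gamma r s c \<inter> kdeg r j"
      "y \<in> Htilde r f rep \<inter> kdeg r (r - j)"
    using v unfolding top_gens_def by blast
  consider "s < j" | "\<not> koszul_H_nonzero r f (r - j)" | "j \<le> s" "koszul_H_nonzero r f (r - j)"
    by linarith
  then show ?thesis
  proof cases
    case 1
    then have "v = 0" using xy Gamma_kdeg_above_vanish[of x r s c j] by simp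
    then show ?thesis by (simp add: ring_mod.span_zero)
  next
    case 2
    then have "y \<in> kbound r f (r - j)"
      using xy(3) Htilde_subset_kcycles[OF reps] unfolding koszul_H_nonzero_def by blast
    then obtain w where "y = kd r f w" unfolding kbound_def by blast
    then have "v \<in> ring_mod.span (a ` {..<s})"
      using xy(1,2) Gamma_wedge_boundary_in_ideal[OF a, of x j w] by simp
    moreover have "ring_mod.span (a ` {..<s}) \<subseteq> ring_mod.span (a ` {..<s} \<union> ?G)"
      by (rule ring_mod.span_mono) blast
    ultimately show ?thesis by blast
  next
    case 3
    then have "r - j \<in> {i. r - s \<le> i \<and> enat i + kgrade r f \<le> enat r}"
      using koszul_H_nonzero_kgrade[of "r - j" r f] by auto
    moreover have "v \<in> top_gens r (Gamma r s c) (Htilde r f rep) (r - (r - j))"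
      using xy \<open>j \<le> r\<close> unfolding top_gens_def by auto
    ultimately have "v \<in> ?G" by blast
    then show ?thesis by (simp add: ring_mod.span_base)
  qed
qed

lemma span_Htilde_eq_admissible_span:
  assumes a: "\<forall>j<s. a j = (\<Sum>i<r. c i j * f i)" and reps: "koszul_reps r f rep"
  shows "ring_mod.span (a ` {..<s} \<union> (\<Union>j\<le>r. top_gens r (Gamma r s c) (Htilde r f rep) j))
    = ring_mod.span (a ` {..<s} \<union>
      (\<Union>i\<in>{i. r - s \<le> i \<and> enat i + kgrade r f \<le> enat r}. top_gens r (Gamma r s c) (Htilde r f rep) (r - i)))"
  unfolding ring_mod.span_eq
proof (intro conjI subsetI)
  fix v assume "v \<in> a ` {..<s} \<union> (\<Union>j\<le>r. top_gens r (Gamma r s c) (Htilde r f rep) j)"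
  then show "v \<in> ring_mod.span (a ` {..<s} \<union> (\<Union>i\<in>{i. r - s \<le> i \<and> enat i + kgrade r f \<le> enat r}.
      top_gens r (Gamma r s c) (Htilde r f rep) (r - i)))"
    using top_gen_Htilde_in_admissible_span[OF a reps] by (auto simp: ring_mod.span_base)
next
  fix v assume "v \<in> a ` {..<s} \<union> (\<Union>i\<in>{i. r - s \<le> i \<and> enat i + kgrade r f \<le> enat r}.
      top_gens r (Gamma r s c) (Htilde r f rep) (r - i))"
  then have "v \<in> a ` {..<s} \<union> (\<Union>j\<le>r. top_gens r (Gamma r s c) (Htilde r f rep) j)"
    by auto
  then show "v \<in> ring_mod.span (a ` {..<s} \<union> (\<Union>j\<le>r. top_gens r (Gamma r s c) (Htilde r f rep) j))"
    by (rule ring_mod.span_base)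
qed

theorem theorem4p22:
  fixes f a :: "nat \<Rightarrow> 'a::comm_ring_1" and c :: "nat \<Rightarrow> nat \<Rightarrow> 'a"
    and r s :: nat and rep :: "nat \<Rightarrow> 'a kelt \<Rightarrow> 'a kelt"
  assumes "\<forall>j<s. a j = (\<Sum>i<r. c i j * f i)"
    and "koszul_reps r f rep"
  shows "kitt r s c f
           = ideal_sum {rspan (a ` {..<s}), top_ideal r (Gamma r s c) (Htilde r f rep)}
       \<and> ideal_sum {rspan (a ` {..<s}), top_ideal r (Gamma r s c) (Htilde r f rep)}
           = ideal_sum ({rspan (a ` {..<s})} \<union>
               {top_ideal_deg r (Gamma r s c) (Htilde r f rep) (r - i) | i.
                  r - s \<le> i \<and> enat i + kgrade r f \<le> enat r})"
proof -
  let ?J = "a ` {..<s}" and ?G = "top_gens r (Gamma r s c) (Htilde r f rep)"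
  let ?A = "{i. r - s \<le> i \<and> enat i + kgrade r f \<le> enat r}"
  have top: "ideal_sum {rspan ?J, top_ideal r (Gamma r s c) (Htilde r f rep)}
      = ring_mod.span (?J \<union> (\<Union>j\<le>r. ?G j))"
    using ideal_sum_span_image[of "{?J, \<Union>j\<le>r. ?G j}"]
    by (simp add: rspan_eq_span top_ideal_eq_span)
  have "{rspan ?J} \<union> {top_ideal_deg r (Gamma r s c) (Htilde r f rep) (r - i) | i.
        r - s \<le> i \<and> enat i + kgrade r f \<le> enat r}
      = ring_mod.span ` ({?J} \<union> (\<lambda>i. ?G (r - i)) ` ?A)"
    by (auto simp: rspan_eq_span top_ideal_deg_eq_span)
  then have graded: "ideal_sum ({rspan ?J} \<union>
      {top_ideal_deg r (Gamma r s c) (Htilde r f rep) (r - i) | i.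
        r - s \<le> i \<and> enat i + kgrade r f \<le> enat r})
      = ring_mod.span (?J \<union> (\<Union>i\<in>?A. ?G (r - i)))"
    using ideal_sum_span_image[of "{?J} \<union> (\<lambda>i. ?G (r - i)) ` ?A"] by simp
  show ?thesis
    unfolding top graded kitt_eq_span_Htilde[OF assms] span_Htilde_eq_admissible_span[OF assms]
    by (rule conjI refl)+
qed

end
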